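(* For every twin-free forest $F$ of order $n \ge 2$, we have $i_{\max}(F) \ge f(n-1)$.
   Context: $i_{\max}(F)$ denotes the number of maximal independent sets of $F$. A graph is twin-free if no two vertices have the same open neighbourhood. The function $f$ is defined by $f(1)=1$, $f(2)=f(3)=2$, and for $n\ge 4$: $f(n)=4\cdot 3^{n/5-1}$ if $n\equiv 0 \pmod 5$; $5\cdot 3^{(n-6)/5}$ if $n\equiv 1$; $2\cdot 3^{(n-2)/5}$ if $n\equiv 2$; $8\cdot 3^{(n-8)/5}$ if $n\equiv 3$; $3^{(n+1)/5}$ if $n\equiv 4 \pmod 5$. *)

theory Defs
  imports Main
begin

definition simple_graph :: "'a set \<Rightarrow> ('a \<Rightarrow> 'a \<Rightarrow> bool) \<Rightarrow> bool" where
  "simple_graph V E \<longleftrightarrow> finite V \<and> (\<forall>x y. E x y \<longrightarrow> x \<in> V \<and> y \<in> V)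
     \<and> (\<forall>x y. E x y \<longrightarrow> E y x) \<and> (\<forall>x. \<not> E x x)"

definition is_cycle :: "'a set \<Rightarrow> ('a \<Rightarrow> 'a \<Rightarrow> bool) \<Rightarrow> 'a list \<Rightarrow> bool" where
  "is_cycle V E cs \<longleftrightarrow> length cs \<ge> 3 \<and> distinct cs \<and> set cs \<subseteq> V
     \<and> (\<forall>i. Suc i < length cs \<longrightarrow> E (cs ! i) (cs ! Suc i))
     \<and> E (last cs) (hd cs)"

definition forest :: "'a set \<Rightarrow> ('a \<Rightarrow> 'a \<Rightarrow> bool) \<Rightarrow> bool" where
  "forest V E \<longleftrightarrow> simple_graph V E \<and> (\<nexists>cs. is_cycle V E cs)"

definition open_nbhd :: "'a set \<Rightarrow> ('a \<Rightarrow> 'a \<Rightarrow> bool) \<Rightarrow> 'a \<Rightarrow> 'a set" where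
  "open_nbhd V E v = {u \<in> V. E v u}"

definition twin_free :: "'a set \<Rightarrow> ('a \<Rightarrow> 'a \<Rightarrow> bool) \<Rightarrow> bool" where
  "twin_free V E \<longleftrightarrow> (\<forall>u\<in>V. \<forall>v\<in>V. u \<noteq> v \<longrightarrow> open_nbhd V E u \<noteq> open_nbhd V E v)"

definition independent :: "'a set \<Rightarrow> ('a \<Rightarrow> 'a \<Rightarrow> bool) \<Rightarrow> 'a set \<Rightarrow> bool" where
  "independent V E S \<longleftrightarrow> S \<subseteq> V \<and> (\<forall>x\<in>S. \<forall>y\<in>S. \<not> E x y)"

definition maximal_independent :: "'a set \<Rightarrow> ('a \<Rightarrow> 'a \<Rightarrow> bool) \<Rightarrow> 'a set \<Rightarrow> bool" where
  "maximal_independent V E S \<longleftrightarrow> independent V E S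
     \<and> (\<forall>T. independent V E T \<longrightarrow> S \<subseteq> T \<longrightarrow> T = S)"

definition i_max :: "'a set \<Rightarrow> ('a \<Rightarrow> 'a \<Rightarrow> bool) \<Rightarrow> nat" where
  "i_max V E = card {S. maximal_independent V E S}"

text \<open>The function f from the paper (n \<ge> 1; f 0 is irrelevant and set to 0).\<close>

definition f :: "nat \<Rightarrow> nat" where
  "f n = (if n = 0 then 0 else if n = 1 then 1 else if n = 2 \<or> n = 3 then 2
     else if n mod 5 = 0 then 4 * 3 ^ (n div 5 - 1)
     else if n mod 5 = 1 then 5 * 3 ^ ((n - 6) div 5)
     else if n mod 5 = 2 then 2 * 3 ^ ((n - 2) div 5)
     else if n mod 5 = 3 then 8 * 3 ^ ((n - 8) div 5)
     else 3 ^ ((n + 1) div 5))"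

end

theory Submission
  imports Defs
begin

(*
  Call the reduced order r(V) of a vertex set the number of distinct non-empty open
  neighbourhoods in the subgraph induced by V, i.e. the number of non-isolated vertices once
  twins are identified; a twin-free forest on n vertices has r >= n - 1.  We show
  g(r(V)) <= i_max(V) for every finite vertex set V of an acyclic graph, by induction on |V|,
  where g is f raised at 0, 1 and 3.  Deleting a twin changes neither side.  For twin-free V
  take a longest path x0 x1 x2 x3 ...: x0 is a leaf and N(x1) = {x0, x2}, so
  i_max(V) = i_max(V - {x0,x1}) + i_max(V - {x0,x1,x2}).  Maximality of the path and
  twin-freeness leave three shapes for the neighbourhood of x2 (a neighbour carrying a pendant
  edge, degree two, or exactly one extra neighbour, which is a leaf).  In each, deleting a few
  vertices near the start of the path lowers r by a bounded amount, and one of the recurrences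
  g(m) <= g(m-2) + 2 g(m-7), 2 g(m-3), g(m-2) + g(m-4), 3 g(m-5) closes the induction.
*)

section \<open>The bound function\<close>

lemma f_shift5:
  assumes "9 \<le> m"
  shows "f m = 3 * f (m - 5)"
proof -
  define p where "p = m div 5 - 1"
  define r where "r = m mod 5"
  have r: "r < 5" unfolding r_def by simp
  have "m = 5 * (m div 5) + m mod 5" by simp
  moreover have "m div 5 \<ge> 1" using assms by linarith
  ultimately have mm: "m = 5 * p + r + 5" unfolding p_def r_def by linarith
  show ?thesis
  proof (cases p)
    case 0
    then have "m = 9" using mm r assms by linarith
    then show ?thesis by (simp add: f_def)
  next
    case (Suc k)
    have m5: "m - 5 = 5 * k + r + 5" using mm Suc by simp
    have m10: "m = 5 * k + r + 10" using mm Suc by simp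
    have "r = 0 \<or> r = 1 \<or> r = 2 \<or> r = 3 \<or> r = 4" using r by linarith
    then show ?thesis unfolding m5 unfolding m10
      by (elim disjE) (simp_all add: f_def power_add)
  qed
qed

(* g agrees with f except at 0, 1 and 3, where it is larger; with these values the
   recurrences below hold for every m, including the small cases at the bottom of the induction. *)
definition g :: "nat \<Rightarrow> nat" where
  "g m = (if m = 0 then 1 else if m = 1 then 2 else if m = 3 then 3 else f m)"

lemma f_le_g: "f m \<le> g m"
  by (simp add: g_def f_def)

lemma g_shift5:
  assumes "16 \<le> m" and "a \<le> 7"
  shows "g (m - a) = 3 * g (m - 5 - a)"
proof -
  have "g (m - a) = f (m - a)" and "g (m - 5 - a) = f (m - 5 - a)"
    using assms by (auto simp: g_def)
  then show ?thesis using assms f_shift5[of "m - a"] by (simp add: algebra_simps)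
qed

(* Since g m = 3 * g (m - 5) from m = 9 on, every recurrence reduces to the cases m < 16. *)
lemma g_period_induct [case_names small step]:
  assumes "\<And>m::nat. m < 16 \<Longrightarrow> P m" and "\<And>m. 16 \<le> m \<Longrightarrow> P (m - 5) \<Longrightarrow> P m"
  shows "P m"
proof (induction m rule: less_induct)
  case (less m)
  then show ?case using assms by (cases "m < 16") auto
qed

lemma less_16_cases:
  "(m::nat) < 16 \<Longrightarrow> m = 0 \<or> m = 1 \<or> m = 2 \<or> m = 3 \<or> m = 4 \<or> m = 5 \<or> m = 6 \<or> m = 7 \<or>
     m = 8 \<or> m = 9 \<or> m = 10 \<or> m = 11 \<or> m = 12 \<or> m = 13 \<or> m = 14 \<or> m = 15"
  by presburger

lemma g_le_g_Suc: "g m \<le> g (Suc m)"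
proof (induction m rule: g_period_induct)
  case (small m)
  then show ?case using less_16_cases[OF \<open>m < 16\<close>] by (elim disjE) (simp_all add: g_def f_def)
next
  case (step m)
  moreover have "Suc (m - 5) = Suc m - 5" using step by simp
  ultimately show ?case using g_shift5[of m 0] g_shift5[of "Suc m" 0] by simp
qed

lemma g_mono: "m \<le> n \<Longrightarrow> g m \<le> g n"
  by (rule lift_Suc_mono_le[of g, OF g_le_g_Suc])

lemma g_le_double_g_minus_2: "g m \<le> 2 * g (m - 2)"
proof (induction m rule: g_period_induct)
  case (small m)
  then show ?case using less_16_cases[OF \<open>m < 16\<close>] by (elim disjE) (simp_all add: g_def f_def)
next
  case (step m)
  then show ?case using g_shift5[of m 0] g_shift5[of m 2] by simp
qed

lemma g_le_double_g_minus_3: "4 \<le> m \<Longrightarrow> g m \<le> 2 * g (m - 3)"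
proof (induction m rule: g_period_induct)
  case (small m)
  then show ?case using less_16_cases[OF \<open>m < 16\<close>] by (elim disjE) (simp_all add: g_def f_def)
next
  case (step m)
  then show ?case using g_shift5[of m 0] g_shift5[of m 3] by simp
qed

lemma g_le_triple_g_minus_5: "6 \<le> m \<Longrightarrow> g m \<le> 3 * g (m - 5)"
proof (induction m rule: g_period_induct)
  case (small m)
  then show ?case using less_16_cases[OF \<open>m < 16\<close>] by (elim disjE) (simp_all add: g_def f_def)
next
  case (step m)
  then show ?case using g_shift5[of m 0] by simp
qed

lemma g_le_g_minus_2_plus_g_minus_4: "g m \<le> g (m - 2) + g (m - 4)"
proof (induction m rule: g_period_induct)
  case (small m)
  then show ?case using less_16_cases[OF \<open>m < 16\<close>] by (elim disjE) (simp_all add: g_def f_def)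
next
  case (step m)
  then show ?case using g_shift5[of m 0] g_shift5[of m 2] g_shift5[of m 4] by simp
qed

lemma g_le_g_minus_2_plus_double_g_minus_7: "g m \<le> g (m - 2) + 2 * g (m - 7)"
proof (induction m rule: g_period_induct)
  case (small m)
  then show ?case using less_16_cases[OF \<open>m < 16\<close>] by (elim disjE) (simp_all add: g_def f_def)
next
  case (step m)
  then show ?case using g_shift5[of m 0] g_shift5[of m 2] g_shift5[of m 7] by simp
qed

section \<open>Maximal independent sets of induced subgraphs\<close>

locale undirected =
  fixes E :: "'a \<Rightarrow> 'a \<Rightarrow> bool"
  assumes sym: "E x y \<Longrightarrow> E y x" and irrefl: "\<not> E x x"
begin

abbreviation N :: "'a set \<Rightarrow> 'a \<Rightarrow> 'a set" where
  "N V v \<equiv> open_nbhd V E v"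

lemma in_N_iff: "u \<in> N V v \<longleftrightarrow> u \<in> V \<and> E v u"
  by (simp add: open_nbhd_def)

lemma N_Diff: "N (V - X) v = N V v - X"
  by (auto simp: open_nbhd_def)

lemma in_N_commute: "x \<in> V \<Longrightarrow> y \<in> V \<Longrightarrow> x \<in> N V y \<longleftrightarrow> y \<in> N V x"
  unfolding in_N_iff using sym by blast

definition is_mis :: "'a set \<Rightarrow> 'a set \<Rightarrow> bool" where
  "is_mis V S \<longleftrightarrow> S \<subseteq> V \<and> (\<forall>x\<in>S. \<forall>y\<in>S. \<not> E x y) \<and> (\<forall>w\<in>V - S. \<exists>s\<in>S. E w s)"

lemma maximal_independent_iff_is_mis: "maximal_independent V E S \<longleftrightarrow> is_mis V S"
proof
  assume max: "maximal_independent V E S"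
  then have indep: "S \<subseteq> V" "\<forall>x\<in>S. \<forall>y\<in>S. \<not> E x y"
    unfolding maximal_independent_def independent_def by auto
  have "\<exists>s\<in>S. E w s" if w: "w \<in> V - S" for w
  proof (rule ccontr)
    assume "\<not> (\<exists>s\<in>S. E w s)"
    then have "independent V E (insert w S)"
      using indep w irrefl sym unfolding independent_def by blast
    then show False using max w unfolding maximal_independent_def by blast
  qed
  then show "is_mis V S" using indep unfolding is_mis_def by blast
next
  assume "is_mis V S"
  then show "maximal_independent V E S"
    unfolding maximal_independent_def independent_def is_mis_def by blast
qed

lemma i_max_eq_card: "i_max V E = card {S. is_mis V S}"
  unfolding i_max_def maximal_independent_iff_is_mis ..

lemma finite_mis: "finite V \<Longrightarrow> finite {S. is_mis V S}"
  by (rule finite_subset[of _ "Pow V"]) (auto simp: is_mis_def)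

lemma i_max_split:
  assumes "finite V"
  shows "i_max V E = card {S. is_mis V S \<and> x \<in> S} + card {S. is_mis V S \<and> x \<notin> S}"
proof -
  have "{S. is_mis V S} = {S. is_mis V S \<and> x \<in> S} \<union> {S. is_mis V S \<and> x \<notin> S}" by blast
  moreover have "finite {S. is_mis V S \<and> x \<in> S}" "finite {S. is_mis V S \<and> x \<notin> S}"
    by (rule finite_subset[OF _ finite_mis[OF assms]], blast)+
  ultimately show ?thesis
    unfolding i_max_eq_card by (metis (no_types, lifting) card_Un_disjoint disjoint_iff mem_Collect_eq)
qed

lemma mis_containing:
  assumes x: "x \<in> V"
  shows "{S. is_mis V S \<and> x \<in> S} = insert x ` {T. is_mis (V - insert x (N V x)) T}"
proof (intro set_eqI iffI)
  fix S assume "S \<in> {S. is_mis V S \<and> x \<in> S}"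
  then have S: "is_mis V S" "x \<in> S" by auto
  have "S - {x} \<subseteq> V - insert x (N V x)"
  proof
    fix s assume "s \<in> S - {x}"
    then show "s \<in> V - insert x (N V x)" using S by (auto simp: is_mis_def in_N_iff)
  qed
  moreover have "\<exists>s\<in>S - {x}. E w s" if w: "w \<in> V - insert x (N V x) - (S - {x})" for w
  proof -
    obtain s where "s \<in> S" "E w s" using S w unfolding is_mis_def by blast
    moreover have "s \<noteq> x" using sym[OF \<open>E w s\<close>] w by (auto simp: in_N_iff)
    ultimately show ?thesis by blast
  qed
  ultimately have "is_mis (V - insert x (N V x)) (S - {x})"
    using S unfolding is_mis_def by blast
  moreover have "S = insert x (S - {x})" using S by blast
  ultimately show "S \<in> insert x ` {T. is_mis (V - insert x (N V x)) T}" by blast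
next
  fix S assume "S \<in> insert x ` {T. is_mis (V - insert x (N V x)) T}"
  then obtain T where T: "is_mis (V - insert x (N V x)) T" and S: "S = insert x T" by blast
  have "\<not> E x t" if "t \<in> T" for t
    using that T by (auto simp: is_mis_def in_N_iff)
  then have indep: "\<forall>s\<in>S. \<forall>t\<in>S. \<not> E s t"
    using T irrefl sym unfolding S is_mis_def by blast
  have "\<exists>s\<in>S. E w s" if w: "w \<in> V - S" for w
  proof (cases "E x w")
    case True
    then show ?thesis using sym unfolding S by blast
  next
    case False
    then have "w \<in> V - insert x (N V x) - T" using w unfolding S by (auto simp: in_N_iff)
    then show ?thesis using T unfolding S is_mis_def by blast
  qed
  then show "S \<in> {S. is_mis V S \<and> x \<in> S}"
    using x T indep unfolding S is_mis_def by auto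
qed

lemma card_mis_containing:
  assumes "x \<in> V"
  shows "card {S. is_mis V S \<and> x \<in> S} = i_max (V - insert x (N V x)) E"
proof -
  have "inj_on (insert x) {T. is_mis (V - insert x (N V x)) T}"
    by (rule inj_onI) (auto simp: is_mis_def)
  then show ?thesis by (simp add: mis_containing[OF assms] card_image i_max_eq_card)
qed

lemma is_mis_dominates: "is_mis V S \<Longrightarrow> w \<in> V - S \<Longrightarrow> N V w \<inter> S \<noteq> {}"
  unfolding is_mis_def open_nbhd_def by blast

lemma i_max_remove_isolated:
  assumes "finite V" and "z \<in> V" and "N V z = {}"
  shows "i_max V E = i_max (V - {z}) E"
proof -
  have "z \<in> S" if "is_mis V S" for S
    using is_mis_dominates[OF that, of z] assms(2,3) by blast
  then have "card {S. is_mis V S \<and> z \<notin> S} = 0" by (metis (mono_tags) card.empty empty_Collect_eq)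
  then show ?thesis using i_max_split[OF assms(1), of z] card_mis_containing[OF assms(2)] assms(3)
    by simp
qed

lemma i_max_leaf:
  assumes "finite V" and "u \<in> V" and "N V u = {v}"
  shows "i_max V E = i_max (V - {u, v}) E + i_max (V - insert v (N V v)) E"
proof -
  have v: "v \<in> V" "E u v" using assms(3) by (auto simp: in_N_iff)
  have "u \<notin> S \<longleftrightarrow> v \<in> S" if S: "is_mis V S" for S
  proof
    assume "u \<notin> S"
    then have "N V u \<inter> S \<noteq> {}" using is_mis_dominates[OF S, of u] assms(2) by blast
    then show "v \<in> S" using assms(3) by simp
  next
    assume "v \<in> S"
    then show "u \<notin> S" using S v(2) unfolding is_mis_def by blast
  qed
  then have "{S. is_mis V S \<and> u \<notin> S} = {S. is_mis V S \<and> v \<in> S}" by blast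
  then show ?thesis
    using i_max_split[OF assms(1), of u] card_mis_containing[OF assms(2)]
      card_mis_containing[OF v(1)] assms(3) by simp
qed

(* Twins lie in the same maximal independent sets.  Those avoiding u are unaffected by deleting v;
   those containing u correspond to the maximal independent sets of V - N[u], where v is isolated. *)
lemma i_max_remove_twin:
  assumes "finite V" and u: "u \<in> V" and v: "v \<in> V" "u \<noteq> v" and twin: "N V u = N V v"
  shows "i_max V E = i_max (V - {v}) E"
proof -
  have twin': "E u w \<longleftrightarrow> E v w" if "w \<in> V" for w
    using twin that unfolding set_eq_iff in_N_iff by blast
  have "is_mis V S \<longleftrightarrow> is_mis (V - {v}) S" if "u \<notin> S" for S
  proof
    assume S: "is_mis V S"
    then obtain s where "s \<in> S" "E u s"
      using is_mis_dominates[OF S, of u] u \<open>u \<notin> S\<close> by (auto simp: in_N_iff)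
    then have "v \<notin> S" using S twin' unfolding is_mis_def by blast
    then show "is_mis (V - {v}) S" using S unfolding is_mis_def by blast
  next
    assume S: "is_mis (V - {v}) S"
    then obtain s where "s \<in> S" "E u s"
      using is_mis_dominates[OF S, of u] u v \<open>u \<notin> S\<close> by (auto simp: in_N_iff)
    then have "E v s" using S twin' unfolding is_mis_def by blast
    then show "is_mis V S" using S \<open>s \<in> S\<close> unfolding is_mis_def by blast
  qed
  then have avoiding_u: "{S. is_mis V S \<and> u \<notin> S} = {S. is_mis (V - {v}) S \<and> u \<notin> S}"
    by blast
  define U where "U = V - insert u (N V u)"
  have "v \<in> U" using v twin irrefl by (auto simp: U_def in_N_iff)
  moreover have "N U v = {}" using twin by (auto simp: U_def N_Diff)
  moreover have "U - {v} = V - {v} - insert u (N (V - {v}) u)" by (auto simp: U_def N_Diff)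
  ultimately have "i_max U E = i_max (V - {v} - insert u (N (V - {v}) u)) E"
    using i_max_remove_isolated[of U v] assms(1) by (simp add: U_def)
  then have containing_u:
    "card {S. is_mis V S \<and> u \<in> S} = card {S. is_mis (V - {v}) S \<and> u \<in> S}"
    using card_mis_containing[OF u] card_mis_containing[of u "V - {v}"] u v by (simp add: U_def)
  show ?thesis
    using i_max_split[OF assms(1), of u] i_max_split[of "V - {v}" u] assms(1)
      avoiding_u containing_u by simp
qed

definition reduced_order :: "'a set \<Rightarrow> nat" where
  "reduced_order V = card (N V ` V - {{}})"

lemma card_le_reduced_order:
  assumes "finite V" and "W \<subseteq> V" and "inj_on (N V) W" and "\<forall>w\<in>W. N V w \<noteq> {}"
  shows "card W \<le> reduced_order V"
proof -
  have "card W = card (N V ` W)" using card_image[OF assms(3)] by simp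
  also have "\<dots> \<le> card (N V ` V - {{}})" using assms by (intro card_mono) auto
  finally show ?thesis unfolding reduced_order_def .
qed

lemma reduced_order_twin_free:
  assumes "inj_on (N V) V"
  shows "reduced_order V = card {x \<in> V. N V x \<noteq> {}}"
proof -
  have "N V ` V - {{}} = N V ` {x \<in> V. N V x \<noteq> {}}" by auto
  moreover have "inj_on (N V) {x \<in> V. N V x \<noteq> {}}" using assms by (rule inj_on_subset) auto
  ultimately show ?thesis unfolding reduced_order_def by (simp add: card_image)
qed

lemma card_minus_1_le_reduced_order:
  assumes "finite V" and "inj_on (N V) V"
  shows "card V - 1 \<le> reduced_order V"
proof -
  have "card V = card (N V ` V)" using card_image[OF assms(2)] by simp
  then show ?thesis
    using diff_card_le_card_Diff[of "{{}}" "N V ` V"] unfolding reduced_order_def by simp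
qed

lemma reduced_order_remove_twin:
  assumes u: "u \<in> V" and v: "v \<in> V" "u \<noteq> v" and twin: "N V u = N V v"
  shows "reduced_order (V - {v}) = reduced_order V"
proof -
  have v_iff_u: "v \<in> N V x \<longleftrightarrow> u \<in> N V x" if "x \<in> V" for x
    using that u v twin sym unfolding set_eq_iff in_N_iff by blast
  have "N V ` V = insert (N V u) (N V ` (V - {v}))"
    using v twin by (metis image_insert insert_Diff)
  also have "\<dots> = N V ` (V - {v})" using u v by (intro insert_absorb) auto
  finally have "N V ` V = N V ` (V - {v})" .
  then have "N (V - {v}) ` (V - {v}) - {{}} = (\<lambda>A. A - {v}) ` (N V ` V - {{}})"
    using v_iff_u v(2) by (auto simp: N_Diff image_iff) blast+
  moreover have "inj_on (\<lambda>A. A - {v}) (N V ` V)"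
  proof (rule inj_onI)
    fix A B assume "A \<in> N V ` V" "B \<in> N V ` V" and AB: "A - {v} = B - {v}"
    then obtain x y where "x \<in> V" "y \<in> V" "A = N V x" "B = N V y" by blast
    then have "v \<in> A \<longleftrightarrow> v \<in> B" using v_iff_u AB v(2) by blast
    then show "A = B" using AB by blast
  qed
  ultimately show ?thesis
    unfolding reduced_order_def by (simp add: card_image inj_on_subset[of _ "N V ` V"])
qed

definition unique_nbhd :: "'a set \<Rightarrow> 'a \<Rightarrow> bool" where
  "unique_nbhd H c \<longleftrightarrow> N H c \<noteq> {} \<and> (\<forall>z\<in>H. z \<noteq> c \<longrightarrow> N H z \<noteq> N H c)"

lemma inj_on_N_Diff:
  assumes twin_free: "inj_on (N V) V" and "W \<subseteq> V - X"
    and unique: "\<And>c. c \<in> W \<Longrightarrow> N V c \<inter> X \<noteq> {} \<Longrightarrow> unique_nbhd (V - X) c"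
  shows "inj_on (N (V - X)) W"
proof (rule inj_onI, rule ccontr)
  fix x y assume x: "x \<in> W" and y: "y \<in> W" and eq: "N (V - X) x = N (V - X) y" and "x \<noteq> y"
  consider "N V x \<inter> X \<noteq> {}" | "N V y \<inter> X \<noteq> {}" | "N V x \<inter> X = {}" "N V y \<inter> X = {}"
    by blast
  then show False
  proof cases
    case 1
    then show False using unique[of x] x y eq \<open>x \<noteq> y\<close> assms(2) unfolding unique_nbhd_def by auto
  next
    case 2
    then show False using unique[of y] x y eq \<open>x \<noteq> y\<close> assms(2) unfolding unique_nbhd_def by auto
  next
    case 3
    then have "N V x = N V y" using eq by (auto simp: N_Diff)
    then show False using inj_onD[OF twin_free] x y \<open>x \<noteq> y\<close> assms(2) by auto
  qed
qed

(* Deleting X can only empty or merge the neighbourhoods of vertices adjacent to X, and each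
   such vertex outside the exceptional set B keeps a unique neighbourhood by hypothesis. *)
lemma reduced_order_Diff:
  assumes "finite V" and twin_free: "inj_on (N V) V" and "X \<subseteq> V" and "finite B"
    and unique: "\<And>c. c \<in> V - X - B \<Longrightarrow> N V c \<inter> X \<noteq> {} \<Longrightarrow> unique_nbhd (V - X) c"
  shows "reduced_order V - card X - card B \<le> reduced_order (V - X)"
proof -
  define W where "W = {x \<in> V - X - B. N V x \<noteq> {}}"
  have "finite W" "finite X" using assms(1,3) finite_subset unfolding W_def by auto
  then have "card {x \<in> V. N V x \<noteq> {}} \<le> card (W \<union> X \<union> B)"
    using \<open>finite B\<close> by (intro card_mono) (auto simp: W_def)
  also have "\<dots> \<le> card W + card X + card B"
    using card_Un_le[of "W \<union> X" B] card_Un_le[of W X] by linarith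
  finally have "reduced_order V - card X - card B \<le> card W"
    using reduced_order_twin_free[OF twin_free] by simp
  also have "card W \<le> reduced_order (V - X)"
  proof (rule card_le_reduced_order)
    show "inj_on (N (V - X)) W"
      using inj_on_N_Diff[OF twin_free, of W X] unique unfolding W_def by blast
    have "N (V - X) w \<noteq> {}" if "w \<in> W" for w
      using that unique[of w] by (cases "N V w \<inter> X = {}") (auto simp: W_def N_Diff unique_nbhd_def)
    then show "\<forall>w\<in>W. N (V - X) w \<noteq> {}" by blast
  qed (use \<open>finite V\<close> in \<open>auto simp: W_def\<close>)
  finally show ?thesis .
qed

lemma unique_nbhd_leaf:
  assumes "H \<subseteq> V" and t: "N H c = {t}" and "N V t \<subseteq> {c}"
  shows "unique_nbhd H c"
  unfolding unique_nbhd_def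
proof (intro conjI ballI impI)
  fix z assume z: "z \<in> H" "z \<noteq> c"
  show "N H z \<noteq> N H c"
  proof
    assume "N H z = N H c"
    then have "t \<in> N H z" using t by simp
    then have "E z t" by (simp add: in_N_iff)
    then have "E t z" by (rule sym)
    then have "z \<in> N V t" using z assms(1) by (auto simp: in_N_iff)
    then show False using z assms(3) by auto
  qed
qed (use t in simp)

end

section \<open>Paths in acyclic graphs\<close>

locale acyclic_graph = undirected +
  assumes no_cycle:
    "3 \<le> length cs \<Longrightarrow> distinct cs \<Longrightarrow> successively E cs \<Longrightarrow> E (last cs) (hd cs) \<Longrightarrow> False"

lemma forest_imp_acyclic_graph:
  assumes "forest V E"
  shows "acyclic_graph E"
proof unfold_locales
  have G: "\<And>x y. E x y \<Longrightarrow> x \<in> V \<and> y \<in> V" "\<And>x y. E x y \<Longrightarrow> E y x" "\<And>x. \<not> E x x"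
    using assms unfolding forest_def simple_graph_def by blast+
  then show "\<And>x y. E x y \<Longrightarrow> E y x" "\<And>x. \<not> E x x" by blast+
  fix cs :: "'a list"
  assume cs: "3 \<le> length cs" "distinct cs" "successively E cs" "E (last cs) (hd cs)"
  have "cs ! i \<in> V" if "i < length cs" for i
  proof (cases "Suc i < length cs")
    case True
    then show ?thesis using G(1) successively_nth[OF cs(3)] by blast
  next
    case False
    then have "i = length cs - 1" and "cs \<noteq> []" using that by auto
    then have "cs ! i = last cs" by (simp add: last_conv_nth)
    then show ?thesis using G(1) cs(4) by metis
  qed
  then have "is_cycle V E cs"
    using cs unfolding is_cycle_def successively_conv_nth by (auto simp: in_set_conv_nth)
  then show False using assms unfolding forest_def by blast
qed

context acyclic_graph
begin

definition is_path :: "'a list \<Rightarrow> bool" where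
  "is_path xs \<longleftrightarrow> distinct xs \<and> successively E xs"

lemma is_path_segment:
  assumes "is_path xs" and "i \<le> j" and "j < length xs"
  obtains ys where "is_path ys" "length ys = Suc j - i" "hd ys = xs ! i" "last ys = xs ! j"
    "set ys \<subseteq> set xs"
proof -
  define ys where "ys = take (Suc j - i) (drop i xs)"
  have "is_path ys"
    using assms unfolding ys_def is_path_def successively_conv_nth by (auto simp: add.commute[of i])
  moreover have "length ys = Suc j - i" using assms by (simp add: ys_def)
  moreover have "hd ys = xs ! i" "last ys = xs ! j"
    using assms by (auto simp: ys_def hd_conv_nth last_conv_nth)
  moreover have "set ys \<subseteq> set xs"
    unfolding ys_def by (meson set_drop_subset set_take_subset subset_trans)
  ultimately show thesis using that by blast
qed

lemma path_no_chord:
  assumes "is_path xs" and "i + 2 \<le> j" and "j < length xs"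
  shows "\<not> E (xs ! i) (xs ! j)"
proof
  assume e: "E (xs ! i) (xs ! j)"
  obtain ys where ys: "is_path ys" "length ys = Suc j - i" "hd ys = xs ! i" "last ys = xs ! j"
    using is_path_segment[OF assms(1) _ assms(3), of i] assms(2) by auto
  have "3 \<le> length ys" using ys(2) assms(2) by simp
  then show False using no_cycle ys e sym unfolding is_path_def by metis
qed

lemma path_no_two_contacts:
  assumes "is_path xs" and "u \<notin> set xs" and "i < j" and "j < length xs" and "E u (xs ! i)"
  shows "\<not> E u (xs ! j)"
proof
  assume e: "E u (xs ! j)"
  obtain ys where ys: "is_path ys" "length ys = Suc j - i" "hd ys = xs ! i" "last ys = xs ! j"
    "set ys \<subseteq> set xs"
    using is_path_segment[OF assms(1) _ assms(4), of i] assms(3) by auto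
  have "ys \<noteq> []" "3 \<le> length (u # ys)" "u \<notin> set ys" using ys(2,5) assms(2,3) by auto
  then show False
    using no_cycle[of "u # ys"] ys assms(5) sym[OF e] unfolding is_path_def
    by (auto simp: successively_Cons)
qed

lemma path_no_outer_edge:
  assumes "is_path xs" and "u \<notin> set xs" "z \<notin> set xs" and "E u z"
    and "i < length xs" "j < length xs" and "E u (xs ! i)"
  shows "\<not> E z (xs ! j)"
proof -
  have ordered: False
    if hyps: "u \<notin> set xs" "z \<notin> set xs" "E u z" "i \<le> j" "j < length xs"
      "E u (xs ! i)" "E z (xs ! j)" for u z i j
  proof -
    obtain ys where ys: "is_path ys" "length ys = Suc j - i" "hd ys = xs ! i" "last ys = xs ! j"
      "set ys \<subseteq> set xs"
      using is_path_segment[OF assms(1), of i j] hyps(4,5) by auto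
    have "ys \<noteq> []" "3 \<le> length (z # u # ys)" "u \<notin> set ys" "z \<notin> set ys" "u \<noteq> z"
      using ys(2,5) hyps(1-4) irrefl by auto
    then show False
      using no_cycle[of "z # u # ys"] ys hyps(6) sym[OF hyps(3)] sym[OF hyps(7)]
      unfolding is_path_def
      by (auto simp: successively_Cons)
  qed
  show ?thesis
  proof
    assume "E z (xs ! j)"
    then show False
      using ordered[of u z i j] ordered[of z u j i] assms sym[OF assms(4)] by (cases "i \<le> j") auto
  qed
qed

lemma is_path_drop: "is_path xs \<Longrightarrow> is_path (drop k xs)"
  unfolding is_path_def successively_conv_nth by (auto simp: add.commute[of k])

lemma path_neighbour:
  assumes "is_path xs" and "j < length xs" "k < length xs" and "E (xs ! k) (xs ! j)"
  shows "j = Suc k \<or> k = Suc j"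
proof -
  have "\<not> k + 2 \<le> j" using path_no_chord[OF assms(1) _ assms(2)] assms(4) by blast
  moreover have "\<not> j + 2 \<le> k" using path_no_chord[OF assms(1) _ assms(3)] sym[OF assms(4)] by blast
  moreover have "j \<noteq> k" using assms(4) irrefl by auto
  ultimately show ?thesis by linarith
qed

lemma neighbour_off_path:
  assumes "is_path xs" and "u \<notin> set xs" and "k < length xs" and "E u (xs ! k)"
    and "E u z" and "z \<noteq> xs ! k"
  shows "z \<notin> set xs"
proof
  assume "z \<in> set xs"
  then obtain j where j: "j < length xs" "xs ! j = z" by (auto simp: in_set_conv_nth)
  then have "j \<noteq> k" using assms(6) by auto
  then show False
    using path_no_two_contacts[OF assms(1,2)] assms(3-5) j by (metis linorder_neq_iff)
qed

lemma common_neighbours_eq: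
  assumes "E c p" "E c q" "E z p" "E z q" and "p \<noteq> q"
  shows "c = z"
proof (rule ccontr)
  assume "c \<noteq> z"
  moreover have "c \<noteq> p" "c \<noteq> q" "z \<noteq> p" "z \<noteq> q" using assms irrefl by metis+
  ultimately have "distinct [c, p, z, q]" using assms(5) by simp
  moreover have "successively E [c, p, z, q]" "E q c" using assms sym[OF assms(3)] sym[OF assms(2)]
    by simp_all
  ultimately show False using no_cycle[of "[c, p, z, q]"] by simp
qed

lemma unique_nbhd_two_neighbours:
  assumes "p \<in> N H c" "q \<in> N H c" and "p \<noteq> q"
  shows "unique_nbhd H c"
  unfolding unique_nbhd_def
proof (intro conjI ballI impI)
  fix z assume "z \<in> H" "z \<noteq> c"
  show "N H z \<noteq> N H c"
  proof
    assume "N H z = N H c"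
    then have "E z p" "E z q" using assms(1,2) by (auto simp: in_N_iff)
    moreover have "E c p" "E c q" using assms(1,2) by (auto simp: in_N_iff)
    ultimately show False using common_neighbours_eq assms(3) \<open>z \<noteq> c\<close> by metis
  qed
qed (use assms in blast)

end

section \<open>Longest paths in twin-free acyclic graphs\<close>

locale longest_path = acyclic_graph +
  fixes V :: "'a set" and xs :: "'a list"
  assumes twin_free: "inj_on (N V) V"
    and path: "is_path xs" "set xs \<subseteq> V"
    and longest: "\<And>ys. is_path ys \<Longrightarrow> set ys \<subseteq> V \<Longrightarrow> length ys \<le> length xs"
    and two_le_length: "2 \<le> length xs"
begin

lemma longest_path_rev: "longest_path E V (rev xs)"
proof -
  have "is_path (rev xs)"
    using path(1) unfolding is_path_def by (auto elim!: successively_mono elim: sym)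
  then show ?thesis
    using acyclic_graph_axioms twin_free path longest two_le_length
    unfolding longest_path_def longest_path_axioms_def by simp
qed

lemma path_ne: "xs \<noteq> []"
  using two_le_length by auto

lemma path_nth_in: "i < length xs \<Longrightarrow> xs ! i \<in> V"
  using path by auto

lemma path_edge: "Suc i < length xs \<Longrightarrow> E (xs ! i) (xs ! Suc i)"
  using path successively_nth unfolding is_path_def by blast

(* Otherwise ys @ drop k xs would be a longer path. *)
lemma branch_short:
  assumes "is_path ys" "set ys \<subseteq> V - set xs" "ys \<noteq> []" and "k < length xs"
    and "E (last ys) (xs ! k)"
  shows "length ys \<le> k"
proof -
  have "is_path (ys @ drop k xs)"
    using assms path is_path_drop[OF path(1), of k] unfolding is_path_def
    by (auto simp: successively_append_iff hd_drop_conv_nth dest: in_set_dropD)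
  moreover have "set (ys @ drop k xs) \<subseteq> V"
    using assms(2) path(2) set_drop_subset[of k xs] by auto
  ultimately show ?thesis using longest[of "ys @ drop k xs"] assms(4) by simp
qed

lemma no_pendant_at_first: "u \<in> V - set xs \<Longrightarrow> \<not> E (xs ! 0) u"
  using branch_short[of "[u]" 0] path_ne sym by (auto simp: is_path_def)

lemma pendant_at_second:
  assumes u: "u \<in> V - set xs" and "E (xs ! 1) u"
  shows "N V u = {xs ! 1}"
proof
  show "{xs ! 1} \<subseteq> N V u" using sym[OF assms(2)] path_nth_in[of 1] two_le_length
    by (auto simp: in_N_iff)
  show "N V u \<subseteq> {xs ! 1}"
  proof
    fix z assume "z \<in> N V u"
    then have z: "z \<in> V" "E u z" by (auto simp: in_N_iff)
    show "z \<in> {xs ! 1}"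
    proof (rule ccontr)
      assume "z \<notin> {xs ! 1}"
      then have "z \<notin> set xs"
        using neighbour_off_path[OF path(1) _ _ sym[OF assms(2)] z(2)] u two_le_length by auto
      moreover have "is_path [z, u]" using sym[OF z(2)] irrefl[of u] z(2) by (auto simp: is_path_def)
      ultimately show False
        using branch_short[of "[z, u]" 1] u z(1) sym[OF assms(2)] two_le_length by auto
    qed
  qed
qed

lemma N_first: "N V (xs ! 0) = {xs ! 1}"
proof
  show "{xs ! 1} \<subseteq> N V (xs ! 0)"
    using path_edge[of 0] path_nth_in[of 1] two_le_length by (auto simp: in_N_iff)
  show "N V (xs ! 0) \<subseteq> {xs ! 1}"
  proof
    fix u assume u: "u \<in> N V (xs ! 0)"
    then have "u \<in> V" "E (xs ! 0) u" by (auto simp: in_N_iff)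
    show "u \<in> {xs ! 1}"
    proof (cases "u \<in> set xs")
      case True
      then obtain j where "j < length xs" "xs ! j = u" by (auto simp: in_set_conv_nth)
      then show ?thesis
        using path_neighbour[OF path(1), of j 0] \<open>E (xs ! 0) u\<close> path_ne by auto
    next
      case False
      then show ?thesis using no_pendant_at_first \<open>u \<in> V\<close> \<open>E (xs ! 0) u\<close> by blast
    qed
  qed
qed

lemma N_second:
  assumes "3 \<le> length xs"
  shows "N V (xs ! 1) = {xs ! 0, xs ! 2}"
proof
  show "{xs ! 0, xs ! 2} \<subseteq> N V (xs ! 1)"
    using sym[OF path_edge[of 0]] path_edge[of 1] path_nth_in[of 0] path_nth_in[of 2] assms path_ne
    by (auto simp: in_N_iff numeral_2_eq_2)
  show "N V (xs ! 1) \<subseteq> {xs ! 0, xs ! 2}"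
  proof
    fix u assume u: "u \<in> N V (xs ! 1)"
    then have "u \<in> V" "E (xs ! 1) u" by (auto simp: in_N_iff)
    show "u \<in> {xs ! 0, xs ! 2}"
    proof (cases "u \<in> set xs")
      case True
      then obtain j where "j < length xs" "xs ! j = u" by (auto simp: in_set_conv_nth)
      then show ?thesis
        using path_neighbour[OF path(1), of j 1] \<open>E (xs ! 1) u\<close> assms by (auto simp: numeral_2_eq_2)
    next
      case False
      have "N V u = {xs ! 1}"
        using pendant_at_second \<open>u \<in> V\<close> \<open>E (xs ! 1) u\<close> False by blast
      then have "u = xs ! 0"
        using N_first inj_onD[OF twin_free] \<open>u \<in> V\<close> path_nth_in[of 0] path_ne by auto
      then show ?thesis by simp
    qed
  qed
qed

lemma N_last: "N V (xs ! (length xs - 1)) = {xs ! (length xs - 2)}"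
  using longest_path.N_first[OF longest_path_rev] path_ne two_le_length
  by (simp add: rev_nth numeral_2_eq_2)

lemma four_le_length_if_no_edge_component:
  assumes "\<forall>u\<in>V. \<forall>v. N V u = {v} \<longrightarrow> N V v \<noteq> {u}"
  shows "4 \<le> length xs"
proof (rule ccontr)
  assume "\<not> 4 \<le> length xs"
  then consider "length xs = 2" | "length xs = 3" using two_le_length by linarith
  then show False
  proof cases
    case 1
    then have "N V (xs ! 1) = {xs ! 0}" using N_last by simp
    then show False using assms N_first path_nth_in[of 0] 1 by auto
  next
    case 2
    then have "N V (xs ! 2) = N V (xs ! 0)" using N_last N_first by simp
    moreover have "xs ! 2 \<noteq> xs ! 0"
      using path(1) 2 unfolding is_path_def by (simp add: nth_eq_iff_index_eq)
    ultimately show False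
      using inj_onD[OF twin_free] path_nth_in[of 0] path_nth_in[of 2] 2 by auto
  qed
qed

lemma off_path_at_third:
  assumes "4 \<le> length xs" and "E (xs ! 2) u" and "u \<noteq> xs ! 1" "u \<noteq> xs ! 3"
  shows "u \<notin> set xs"
proof
  assume "u \<in> set xs"
  then obtain j where "j < length xs" "xs ! j = u" by (auto simp: in_set_conv_nth)
  then show False
    using path_neighbour[OF path(1), of j 2] assms by (auto simp: numeral_eq_Suc)
qed

lemma pendant_at_third:
  assumes "4 \<le> length xs" and u: "u \<in> V - set xs" "E (xs ! 2) u"
    and z: "z \<in> N V u" "z \<noteq> xs ! 2"
  shows "z \<notin> set xs" and "N V z = {u}"
proof -
  have zV: "z \<in> V" "E u z" using z(1) by (auto simp: in_N_iff)
  show z_off: "z \<notin> set xs"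
    using neighbour_off_path[OF path(1) _ _ sym[OF u(2)] zV(2) z(2)] u assms(1) by auto
  show "N V z = {u}"
  proof
    show "{u} \<subseteq> N V z" using sym[OF zV(2)] u(1) by (auto simp: in_N_iff)
    show "N V z \<subseteq> {u}"
    proof
      fix y assume "y \<in> N V z"
      then have y: "y \<in> V" "E z y" by (auto simp: in_N_iff)
      show "y \<in> {u}"
      proof (rule ccontr)
        assume "y \<notin> {u}"
        have "y \<notin> set xs"
        proof
          assume "y \<in> set xs"
          then obtain j where "j < length xs" "xs ! j = y" by (auto simp: in_set_conv_nth)
          then show False
            using path_no_outer_edge[OF path(1) _ z_off zV(2) _ _ sym[OF u(2)]] u assms(1) y(2)
            by auto
        qed
        moreover have "is_path [y, z, u]"
          using \<open>y \<notin> {u}\<close> sym[OF y(2)] sym[OF zV(2)] irrefl[of z] y(2) zV(2)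
          by (auto simp: is_path_def)
        ultimately show False
          using branch_short[of "[y, z, u]" 2] u zV(1) y(1) z_off sym[OF u(2)] assms(1) by auto
      qed
    qed
  qed
qed

lemma third_neighbour_with_pendant:
  assumes "4 \<le> length xs" and u: "u \<in> V" "E (xs ! 2) u" "u \<noteq> xs ! 1" "u \<noteq> xs ! 3"
    and "N V u \<noteq> {xs ! 2}"
  obtains w where "w \<in> V - set xs" "w \<noteq> u" "N V u = {xs ! 2, w}" "N V w = {u}"
proof -
  have u_off: "u \<in> V - set xs" using off_path_at_third assms(1) u by blast
  have x2: "xs ! 2 \<in> N V u" using sym[OF u(2)] path_nth_in[of 2] assms(1) by (auto simp: in_N_iff)
  then obtain w where w: "w \<in> N V u" "w \<noteq> xs ! 2" using assms(6) by blast
  note pendant = pendant_at_third[OF assms(1) u_off u(2)]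
  have "z = w" if "z \<in> N V u" "z \<noteq> xs ! 2" for z
    using pendant[OF that] pendant[OF w] inj_onD[OF twin_free] that w by (auto simp: in_N_iff)
  then have "N V u = {xs ! 2, w}" using x2 w by blast
  moreover have "w \<in> V - set xs" "w \<noteq> u" using pendant[OF w] w(1) irrefl by (auto simp: in_N_iff)
  ultimately show thesis using that pendant[OF w] by blast
qed

end

locale reduction_step = acyclic_graph +
  fixes V :: "'a set"
  assumes finite: "finite V" and twin_free: "inj_on (N V) V"
    and IH: "\<And>V'. V' \<subset> V \<Longrightarrow> g (reduced_order V') \<le> i_max V' E"
begin

lemma card_le_reduced_order_twin_free:
  "S \<subseteq> V \<Longrightarrow> \<forall>x\<in>S. N V x \<noteq> {} \<Longrightarrow> card S \<le> reduced_order V"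
  using card_le_reduced_order[OF finite] inj_on_subset[OF twin_free] by blast

lemma deletion_bound:
  assumes "X \<subseteq> V" "X \<noteq> {}" "B \<subseteq> V"
    and "\<And>c. c \<in> V - X - B \<Longrightarrow> N V c \<inter> X \<noteq> {} \<Longrightarrow> unique_nbhd (V - X) c"
  shows "g (reduced_order V - card X - card B) \<le> i_max (V - X) E"
proof -
  have "reduced_order V - card X - card B \<le> reduced_order (V - X)"
    using reduced_order_Diff[OF finite twin_free assms(1) finite_subset[OF assms(3) finite]] assms(4)
    by blast
  then have "g (reduced_order V - card X - card B) \<le> g (reduced_order (V - X))" by (rule g_mono)
  also have "\<dots> \<le> i_max (V - X) E" using IH assms(1,2) by blast
  finally show ?thesis .
qed

lemma card_leaves_at_le_1: "card {u \<in> V. N V u = {a}} \<le> 1"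
  using inj_onD[OF twin_free] finite card_le_Suc0_iff_eq[of "{u \<in> V. N V u = {a}}"] by auto

lemma edgeless_case:
  assumes "\<forall>a\<in>V. N V a = {}"
  shows "g (reduced_order V) \<le> i_max V E"
proof -
  have "N V ` V - {{}} = {}" using assms by auto
  then have "reduced_order V = 0" unfolding reduced_order_def by (metis card.empty)
  moreover have "is_mis V V" using assms unfolding is_mis_def open_nbhd_def by auto
  then have "i_max V E \<noteq> 0" using finite_mis[OF finite] by (auto simp: i_max_eq_card)
  ultimately show ?thesis by (simp add: g_def)
qed

lemma edge_component_case:
  assumes u: "u \<in> V" "N V u = {v}" and v: "N V v = {u}"
  shows "g (reduced_order V) \<le> i_max V E"
proof -
  have "v \<in> V" "E u v" using u(2) by (auto simp: in_N_iff)
  then have "u \<noteq> v" using irrefl by metis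
  have "i_max V E = 2 * i_max (V - {u, v}) E"
    using i_max_leaf[OF finite u] v by (simp add: insert_commute)
  moreover have "g (reduced_order V - card {u, v} - card ({} :: 'a set)) \<le> i_max (V - {u, v}) E"
  proof (rule deletion_bound)
    fix c assume c: "c \<in> V - {u, v} - {}" "N V c \<inter> {u, v} \<noteq> {}"
    then have "c \<in> N V u \<or> c \<in> N V v" using in_N_commute u(1) \<open>v \<in> V\<close> by blast
    then show "unique_nbhd (V - {u, v}) c" using u v c(1) by blast
  qed (use u \<open>v \<in> V\<close> in auto)
  ultimately show ?thesis
    using g_le_double_g_minus_2[of "reduced_order V"] \<open>u \<noteq> v\<close> by (simp add: numeral_2_eq_2)
qed

end

locale long_path_step = reduction_step + longest_path +
  assumes four_le_length: "4 \<le> length xs"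
begin

lemma x_in: "xs ! 0 \<in> V" "xs ! 1 \<in> V" "xs ! 2 \<in> V" "xs ! 3 \<in> V"
  using path_nth_in four_le_length path_ne by auto

lemma x_set: "xs ! 0 \<in> set xs" "xs ! 1 \<in> set xs" "xs ! 2 \<in> set xs" "xs ! 3 \<in> set xs"
  using four_le_length path_ne by auto

lemma x_distinct:
  "xs ! 0 \<noteq> xs ! 1" "xs ! 0 \<noteq> xs ! 2" "xs ! 0 \<noteq> xs ! 3"
  "xs ! 1 \<noteq> xs ! 2" "xs ! 1 \<noteq> xs ! 3" "xs ! 2 \<noteq> xs ! 3"
  using path(1) four_le_length path_ne unfolding is_path_def by (auto simp: nth_eq_iff_index_eq)

lemma x_edges: "E (xs ! 1) (xs ! 2)" "E (xs ! 2) (xs ! 1)" "E (xs ! 2) (xs ! 3)" "E (xs ! 3) (xs ! 2)"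
proof -
  show 12: "E (xs ! 1) (xs ! 2)" and 23: "E (xs ! 2) (xs ! 3)"
    using path_edge[of 1] path_edge[of 2] four_le_length by (auto simp: numeral_eq_Suc)
  show "E (xs ! 2) (xs ! 1)" "E (xs ! 3) (xs ! 2)" using sym[OF 12] sym[OF 23] .
qed

lemma N_x1: "N V (xs ! 1) = {xs ! 0, xs ! 2}"
  using N_second four_le_length by simp

lemma x_non_isolated: "N V (xs ! 0) \<noteq> {}" "N V (xs ! 1) \<noteq> {}" "N V (xs ! 2) \<noteq> {}" "N V (xs ! 3) \<noteq> {}"
  using x_in x_edges N_first by (auto simp: in_N_iff)

lemma four_le_reduced_order: "4 \<le> reduced_order V"
proof -
  have "card {xs ! 0, xs ! 1, xs ! 2, xs ! 3} = 4" using x_distinct by auto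
  moreover have "card {xs ! 0, xs ! 1, xs ! 2, xs ! 3} \<le> reduced_order V"
    using x_in x_non_isolated by (intro card_le_reduced_order_twin_free) auto
  ultimately show ?thesis by simp
qed

lemma i_max_split_at_start:
  "i_max V E = i_max (V - {xs ! 0, xs ! 1}) E + i_max (V - {xs ! 0, xs ! 1, xs ! 2}) E"
  using i_max_leaf[OF finite x_in(1) N_first] N_x1 by (simp add: insert_commute)

lemma touching_first_two:
  "c \<in> V - {xs ! 0, xs ! 1} \<Longrightarrow> N V c \<inter> {xs ! 0, xs ! 1} \<noteq> {} \<Longrightarrow> c = xs ! 2"
  using in_N_commute[of _ V c] x_in N_first N_x1 by auto

lemma touching_first_three:
  assumes "c \<in> V - {xs ! 0, xs ! 1, xs ! 2}" "N V c \<inter> {xs ! 0, xs ! 1, xs ! 2} \<noteq> {}"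
  shows "c \<in> N V (xs ! 2) - {xs ! 1}"
proof -
  have "E (xs ! 2) c" using assms in_N_commute[of _ V c] x_in N_first N_x1 by (auto simp: in_N_iff)
  then show ?thesis using assms(1) by (auto simp: in_N_iff)
qed

lemma bound_delete_first_two:
  assumes w: "w \<in> N V (xs ! 2)" "w \<noteq> xs ! 1" "w \<noteq> xs ! 3"
  shows "g (reduced_order V - 2) \<le> i_max (V - {xs ! 0, xs ! 1}) E"
proof -
  have "g (reduced_order V - card {xs ! 0, xs ! 1} - card ({} :: 'a set))
      \<le> i_max (V - {xs ! 0, xs ! 1}) E"
  proof (rule deletion_bound)
    fix c assume "c \<in> V - {xs ! 0, xs ! 1} - {}" "N V c \<inter> {xs ! 0, xs ! 1} \<noteq> {}"
    then have "c = xs ! 2" using touching_first_two by blast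
    moreover have "w \<noteq> xs ! 0"
    proof
      assume "w = xs ! 0"
      then have "xs ! 2 \<in> N V (xs ! 0)" using sym[of "xs ! 2" "xs ! 0"] w(1) x_in(3) by (simp add: in_N_iff)
      then show False using N_first x_distinct(4) by simp
    qed
    then have "w \<in> N (V - {xs ! 0, xs ! 1}) (xs ! 2)" "xs ! 3 \<in> N (V - {xs ! 0, xs ! 1}) (xs ! 2)"
      using w x_in x_edges x_distinct by (auto simp: N_Diff in_N_iff)
    ultimately show "unique_nbhd (V - {xs ! 0, xs ! 1}) c"
      using unique_nbhd_two_neighbours w(3) by blast
  qed (use x_in in auto)
  then show ?thesis using x_distinct by (simp add: numeral_2_eq_2)
qed

lemma bound_delete_deep_branch:
  assumes w: "w \<in> V" "w \<notin> set xs" and p: "p \<in> V - set xs" "p \<noteq> w"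
    and N_w: "N V w = {xs ! 2, p}" and N_p: "N V p = {w}"
  shows "g (reduced_order V - 7) \<le> i_max (V - {xs ! 0, xs ! 1, xs ! 2, w, p}) E"
proof -
  define X where "X = {xs ! 0, xs ! 1, xs ! 2, w, p}"
  \<comment> \<open>the neighbours of X whose neighbourhood in V - X may be empty or shared\<close>
  define B where "B = {u \<in> V. N V u = {xs ! 2}} \<union> {xs ! 3}"
  have "xs ! 0 \<noteq> w" "xs ! 1 \<noteq> w" "xs ! 2 \<noteq> w" "xs ! 0 \<noteq> p" "xs ! 1 \<noteq> p" "xs ! 2 \<noteq> p"
    using w(2) p(1) x_set by auto
  then have card_X: "card X = 5" using x_distinct p(2) unfolding X_def by auto
  have "card B \<le> card {u \<in> V. N V u = {xs ! 2}} + card {xs ! 3}"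
    unfolding B_def by (rule card_Un_le)
  then have card_B: "card B \<le> 2" using card_leaves_at_le_1[of "xs ! 2"] by simp
  have "g (reduced_order V - card X - card B) \<le> i_max (V - X) E"
  proof (rule deletion_bound)
    fix c assume c: "c \<in> V - X - B" and "N V c \<inter> X \<noteq> {}"
    then obtain x where x: "x \<in> X" "c \<in> N V x" using in_N_commute[of _ V c] w p x_in
      unfolding X_def by blast
    have "x = xs ! 2"
      using x c N_first N_x1 N_w N_p unfolding X_def by auto
    then have "E (xs ! 2) c" using x by (simp add: in_N_iff)
    moreover have "c \<noteq> xs ! 1" "c \<noteq> xs ! 3" "N V c \<noteq> {xs ! 2}" using c unfolding X_def B_def by auto
    ultimately obtain w' where w': "w' \<in> V - set xs" "w' \<noteq> c" "N V c = {xs ! 2, w'}" "N V w' = {c}"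
      using third_neighbour_with_pendant[OF four_le_length] c by blast
    have "w' \<noteq> w" using w' N_w x_set p by auto
    moreover have "w' \<noteq> p" using w' N_p c unfolding X_def by auto
    ultimately have "N (V - X) c = {w'}" using w' x_set unfolding X_def by (auto simp: N_Diff)
    then show "unique_nbhd (V - X) c" using unique_nbhd_leaf w' by blast
  qed (use x_in w p in \<open>auto simp: X_def B_def\<close>)
  moreover have "g (reduced_order V - 7) \<le> g (reduced_order V - card X - card B)"
    using card_X card_B by (intro g_mono) linarith
  ultimately show ?thesis unfolding X_def by simp
qed

lemma case_third_has_deep_neighbour:
  assumes w: "w \<in> N V (xs ! 2)" "w \<noteq> xs ! 1" "w \<noteq> xs ! 3" "N V w \<noteq> {xs ! 2}"
  shows "g (reduced_order V) \<le> i_max V E"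
proof -
  have wV: "w \<in> V" "E (xs ! 2) w" using w(1) by (auto simp: in_N_iff)
  then obtain p where p: "p \<in> V - set xs" "p \<noteq> w" "N V w = {xs ! 2, p}" "N V p = {w}"
    using third_neighbour_with_pendant[OF four_le_length] w by blast
  have w_off: "w \<notin> set xs" using off_path_at_third[OF four_le_length wV(2) w(2,3)] .
  define X2 where "X2 = {xs ! 0, xs ! 1, xs ! 2}"
  have "p \<in> V - X2" "N (V - X2) p = {w}" "N (V - X2) w = {p}"
    using p w_off x_set wV unfolding X2_def by (auto simp: N_Diff)
  then have "i_max (V - X2) E = 2 * i_max (V - X2 - {p, w}) E"
    using i_max_leaf[of "V - X2" p w] finite by (simp add: insert_commute)
  moreover have "V - X2 - {p, w} = V - {xs ! 0, xs ! 1, xs ! 2, w, p}" unfolding X2_def by auto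
  ultimately have "i_max V E = i_max (V - {xs ! 0, xs ! 1}) E
      + 2 * i_max (V - {xs ! 0, xs ! 1, xs ! 2, w, p}) E"
    using i_max_split_at_start unfolding X2_def by simp
  moreover have "g (reduced_order V)
      \<le> g (reduced_order V - 2) + 2 * g (reduced_order V - 7)"
    by (rule g_le_g_minus_2_plus_double_g_minus_7)
  ultimately show ?thesis
    using bound_delete_first_two[OF w(1-3)] bound_delete_deep_branch[OF wV(1) w_off p] by linarith
qed

lemma case_third_degree_two_shared_leaf:
  assumes N_x2: "N V (xs ! 2) = {xs ! 1, xs ! 3}"
    and z: "z \<in> V" "z \<noteq> xs ! 2" "N V z = {xs ! 3}"
  shows "g (reduced_order V) \<le> i_max V E"
proof -
  define X1 where "X1 = {xs ! 0, xs ! 1}"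
  define X2 where "X2 = {xs ! 0, xs ! 1, xs ! 2}"
  have "g (reduced_order V - card X1 - card {xs ! 2}) \<le> i_max (V - X1) E"
    by (rule deletion_bound) (use x_in touching_first_two in \<open>auto simp: X1_def\<close>)
  moreover have "g (reduced_order V - card X2 - card ({} :: 'a set)) \<le> i_max (V - X2) E"
  proof (rule deletion_bound)
    fix c assume "c \<in> V - X2 - {}" "N V c \<inter> X2 \<noteq> {}"
    then have c: "c = xs ! 3"
      using touching_first_three N_x2 unfolding X2_def by blast
    have "z \<noteq> xs ! 0" "z \<noteq> xs ! 1" using z(3) N_first N_x1 x_distinct by auto
    then have z_in: "z \<in> N (V - X2) (xs ! 3)"
      using z x_in in_N_commute[of z V "xs ! 3"] unfolding X2_def by (auto simp: N_Diff)
    show "unique_nbhd (V - X2) c"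
    proof (cases "N (V - X2) (xs ! 3) = {z}")
      case True
      then show ?thesis unfolding c using unique_nbhd_leaf[of "V - X2" V "xs ! 3" z] z by auto
    next
      case False
      then obtain q where "q \<in> N (V - X2) (xs ! 3)" "q \<noteq> z" using z_in by blast
      then show ?thesis unfolding c using unique_nbhd_two_neighbours z_in by blast
    qed
  qed (use x_in in \<open>auto simp: X2_def\<close>)
  moreover have "card X1 = 2" "card X2 = 3" using x_distinct unfolding X1_def X2_def by auto
  ultimately have "2 * g (reduced_order V - 3) \<le> i_max V E"
    using i_max_split_at_start unfolding X1_def X2_def by simp
  then show ?thesis
    using g_le_double_g_minus_3[OF four_le_reduced_order] by linarith
qed

lemma case_third_degree_two:
  assumes N_x2: "N V (xs ! 2) = {xs ! 1, xs ! 3}"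
    and no_shared_leaf: "\<forall>z\<in>V. z \<noteq> xs ! 2 \<longrightarrow> N V z \<noteq> {xs ! 3}"
  shows "g (reduced_order V) \<le> i_max V E"
proof -
  define X1 where "X1 = {xs ! 0, xs ! 1}"
  define X2 where "X2 = {xs ! 0, xs ! 1, xs ! 2}"
  have N_x2_X1: "N (V - X1) (xs ! 2) = {xs ! 3}"
    using N_x2 x_distinct unfolding X1_def by (auto simp: N_Diff)
  have "g (reduced_order V - card X1 - card ({} :: 'a set)) \<le> i_max (V - X1) E"
  proof (rule deletion_bound)
    fix c assume "c \<in> V - X1 - {}" "N V c \<inter> X1 \<noteq> {}"
    then have c: "c = xs ! 2" using touching_first_two unfolding X1_def by blast
    have "N (V - X1) z \<noteq> {xs ! 3}" if "z \<in> V - X1" "z \<noteq> xs ! 2" for z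
    proof (cases "N V z \<inter> X1 = {}")
      case True
      then show ?thesis using no_shared_leaf that by (auto simp: N_Diff)
    next
      case False
      then show ?thesis using touching_first_two that unfolding X1_def by blast
    qed
    then show "unique_nbhd (V - X1) c" unfolding c unique_nbhd_def N_x2_X1 by auto
  qed (use x_in in \<open>auto simp: X1_def\<close>)
  moreover have "g (reduced_order V - card X2 - card {xs ! 3}) \<le> i_max (V - X2) E"
  proof (rule deletion_bound)
    fix c assume "c \<in> V - X2 - {xs ! 3}" "N V c \<inter> X2 \<noteq> {}"
    then show "unique_nbhd (V - X2) c"
      using touching_first_three N_x2 unfolding X2_def by blast
  qed (use x_in in \<open>auto simp: X2_def\<close>)
  moreover have "card X1 = 2" "card X2 = 3" using x_distinct unfolding X1_def X2_def by auto
  ultimately have "g (reduced_order V - 2) + g (reduced_order V - 4) \<le> i_max V E"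
    using i_max_split_at_start unfolding X1_def X2_def by simp
  then show ?thesis
    using g_le_g_minus_2_plus_g_minus_4[of "reduced_order V"] by linarith
qed

lemma case_third_with_leaf_unique_x3:
  assumes N_x2: "N V (xs ! 2) = {xs ! 1, xs ! 3, y}" and y: "y \<noteq> xs ! 1" "y \<noteq> xs ! 3"
    and unique: "unique_nbhd (V - {xs ! 0, xs ! 1, xs ! 2}) (xs ! 3)"
  shows "g (reduced_order V) \<le> i_max V E"
proof -
  define X2 where "X2 = {xs ! 0, xs ! 1, xs ! 2}"
  have "y \<in> N V (xs ! 2)" using N_x2 by simp
  have "g (reduced_order V - card X2 - card {y}) \<le> i_max (V - X2) E"
  proof (rule deletion_bound)
    fix c assume "c \<in> V - X2 - {y}" "N V c \<inter> X2 \<noteq> {}"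
    then show "unique_nbhd (V - X2) c"
      using touching_first_three N_x2 unique unfolding X2_def by blast
  qed (use x_in \<open>y \<in> N V (xs ! 2)\<close> in \<open>auto simp: X2_def in_N_iff\<close>)
  moreover have "card X2 = 3" using x_distinct unfolding X2_def by auto
  ultimately have "g (reduced_order V - 2) + g (reduced_order V - 4) \<le> i_max V E"
    using i_max_split_at_start bound_delete_first_two[OF \<open>y \<in> N V (xs ! 2)\<close> y] unfolding X2_def
    by simp
  then show ?thesis
    using g_le_g_minus_2_plus_g_minus_4[of "reduced_order V"] by linarith
qed

context
  fixes y
  assumes N_x2: "N V (xs ! 2) = {xs ! 1, xs ! 3, y}" and y: "y \<noteq> xs ! 1" "y \<noteq> xs ! 3"
    and N_y: "N V y = {xs ! 2}"
begin

lemma third_leaf: "y \<in> V" "y \<notin> {xs ! 0, xs ! 1, xs ! 2, xs ! 3}"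
proof -
  have "y \<in> V" "E (xs ! 2) y" using N_x2 by (auto simp: in_N_iff)
  moreover have "y \<noteq> xs ! 0" using N_y N_first x_distinct(4) by force
  ultimately show "y \<in> V" "y \<notin> {xs ! 0, xs ! 1, xs ! 2, xs ! 3}" using y irrefl by auto
qed

lemma i_max_split_third_leaf:
  "i_max V E = 2 * i_max (V - {xs ! 0, xs ! 1, xs ! 2, y}) E
    + i_max (V - {xs ! 0, xs ! 1, xs ! 2, y, xs ! 3}) E"
proof -
  define X1 where "X1 = {xs ! 0, xs ! 1}"
  define X2 where "X2 = {xs ! 0, xs ! 1, xs ! 2}"
  have "y \<in> V - X1" "N (V - X1) y = {xs ! 2}"
    using third_leaf N_y x_distinct by (auto simp: X1_def N_Diff)
  moreover have "V - X1 - {y, xs ! 2} = V - {xs ! 0, xs ! 1, xs ! 2, y}" by (auto simp: X1_def)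
  moreover have "V - X1 - insert (xs ! 2) (N (V - X1) (xs ! 2)) = V - {xs ! 0, xs ! 1, xs ! 2, y, xs ! 3}"
    using N_x2 by (auto simp: X1_def N_Diff)
  ultimately have "i_max (V - X1) E = i_max (V - {xs ! 0, xs ! 1, xs ! 2, y}) E
      + i_max (V - {xs ! 0, xs ! 1, xs ! 2, y, xs ! 3}) E"
    using i_max_leaf[of "V - X1" y "xs ! 2"] finite by simp
  moreover have "y \<in> V - X2" "N (V - X2) y = {}" using third_leaf N_y by (auto simp: X2_def N_Diff)
  moreover have "V - X2 - {y} = V - {xs ! 0, xs ! 1, xs ! 2, y}" by (auto simp: X2_def)
  ultimately show ?thesis
    using i_max_split_at_start i_max_remove_isolated[of "V - X2" y] finite
    unfolding X1_def X2_def by simp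
qed

lemma bound_delete_third_leaf:
  "g (reduced_order V - 5) \<le> i_max (V - {xs ! 0, xs ! 1, xs ! 2, y}) E"
proof -
  define X where "X = {xs ! 0, xs ! 1, xs ! 2, y}"
  have "g (reduced_order V - card X - card {xs ! 3}) \<le> i_max (V - X) E"
  proof (rule deletion_bound)
    fix c assume c: "c \<in> V - X - {xs ! 3}" and "N V c \<inter> X \<noteq> {}"
    then obtain x where "x \<in> X" "c \<in> N V x"
      using in_N_commute[of _ V c] x_in third_leaf unfolding X_def by blast
    then show "unique_nbhd (V - X) c" using c N_first N_x1 N_x2 N_y unfolding X_def by auto
  qed (use x_in third_leaf in \<open>auto simp: X_def\<close>)
  moreover have "card X = 4" using x_distinct third_leaf by (auto simp: X_def)
  ultimately show ?thesis unfolding X_def by simp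
qed

lemma x3_keeps_neighbour: "N (V - {xs ! 0, xs ! 1, xs ! 2}) (xs ! 3) \<noteq> {}"
proof
  assume "N (V - {xs ! 0, xs ! 1, xs ! 2}) (xs ! 3) = {}"
  then have "N V (xs ! 3) \<subseteq> {xs ! 0, xs ! 1, xs ! 2}" by (auto simp: N_Diff)
  moreover have "xs ! 0 \<notin> N V (xs ! 3)" "xs ! 1 \<notin> N V (xs ! 3)"
    using N_first N_x1 x_distinct x_in in_N_commute[of "xs ! 0" V "xs ! 3"]
      in_N_commute[of "xs ! 1" V "xs ! 3"] by auto
  moreover have "xs ! 2 \<in> N V (xs ! 3)" using x_edges x_in by (simp add: in_N_iff)
  ultimately have "N V (xs ! 3) = N V y" using N_y by auto
  then show False using inj_onD[OF twin_free] x_in third_leaf by auto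
qed

lemma third_leaf_obstruction:
  assumes not_unique: "\<not> unique_nbhd (V - {xs ! 0, xs ! 1, xs ! 2}) (xs ! 3)"
  obtains t z where "t \<in> V" "t \<notin> {xs ! 0, xs ! 1, xs ! 2, xs ! 3, y}" "E (xs ! 3) t"
    "N V (xs ! 3) \<subseteq> {xs ! 0, xs ! 1, xs ! 2, t}"
    "z \<in> V" "z \<notin> {xs ! 0, xs ! 1, xs ! 2, xs ! 3, y}" "N V z = {t}"
proof -
  define H where "H = V - {xs ! 0, xs ! 1, xs ! 2}"
  have N_H_y: "N H y = {}" using third_leaf N_y by (auto simp: H_def N_Diff)
  obtain z where z: "z \<in> H" "z \<noteq> xs ! 3" "N H z = N H (xs ! 3)"
    using not_unique x3_keeps_neighbour x_in x_distinct unfolding unique_nbhd_def H_def by auto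
  obtain t where "t \<in> N H (xs ! 3)" using x3_keeps_neighbour unfolding H_def by blast
  moreover have "q = t" if "q \<in> N H (xs ! 3)" "t \<in> N H (xs ! 3)" for q
    using unique_nbhd_two_neighbours[OF that] not_unique unfolding H_def by blast
  ultimately have t: "N H (xs ! 3) = {t}" by blast
  have "z \<noteq> y" using z t N_H_y by auto
  have "N V z \<inter> {xs ! 0, xs ! 1, xs ! 2} = {}"
    using touching_first_three[of z] z \<open>z \<noteq> y\<close> N_x2 unfolding H_def by blast
  then have "N V z = {t}" using z t by (auto simp: H_def N_Diff)
  have tH: "t \<in> H" "E (xs ! 3) t" using t by (auto simp: in_N_iff)
  moreover have "t \<noteq> y"
  proof
    assume "t = y"
    then have "xs ! 3 \<in> N V y" using sym[OF tH(2)] x_in by (simp add: in_N_iff)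
    then show False using N_y x_distinct by simp
  qed
  moreover have "t \<noteq> xs ! 3" using tH(2) irrefl by metis
  moreover have "N V (xs ! 3) \<subseteq> {xs ! 0, xs ! 1, xs ! 2, t}" using t by (auto simp: H_def N_Diff)
  moreover have "z \<notin> {xs ! 0, xs ! 1, xs ! 2, xs ! 3, y}" using z \<open>z \<noteq> y\<close> by (auto simp: H_def)
  ultimately show thesis
    by (intro that[of t z]) (use \<open>N V z = {t}\<close> z(1) in \<open>auto simp: H_def\<close>)
qed

lemma case_third_with_leaf_twin_x3:
  assumes not_unique: "\<not> unique_nbhd (V - {xs ! 0, xs ! 1, xs ! 2}) (xs ! 3)"
  shows "g (reduced_order V) \<le> i_max V E"
proof -
  obtain t z where t: "t \<in> V" "t \<notin> {xs ! 0, xs ! 1, xs ! 2, xs ! 3, y}" "E (xs ! 3) t"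
    "N V (xs ! 3) \<subseteq> {xs ! 0, xs ! 1, xs ! 2, t}"
    and z: "z \<in> V" "z \<notin> {xs ! 0, xs ! 1, xs ! 2, xs ! 3, y}" "N V z = {t}"
    using third_leaf_obstruction[OF not_unique] .
  define X where "X = {xs ! 0, xs ! 1, xs ! 2, y, xs ! 3}"
  have "g (reduced_order V - card X - card ({} :: 'a set)) \<le> i_max (V - X) E"
  proof (rule deletion_bound)
    fix c assume c: "c \<in> V - X - {}" and "N V c \<inter> X \<noteq> {}"
    then obtain x where "x \<in> X" "c \<in> N V x"
      using in_N_commute[of _ V c] x_in third_leaf unfolding X_def by blast
    then have "c = t" using c N_first N_x1 N_x2 N_y t(4) unfolding X_def by auto
    have z_in: "z \<in> N (V - X) t" using z t(1) in_N_commute[of z V t] by (auto simp: X_def N_Diff)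
    show "unique_nbhd (V - X) c"
    proof (cases "N (V - X) t = {z}")
      case True
      then show ?thesis using unique_nbhd_leaf[of "V - X" V t z] z \<open>c = t\<close> by auto
    next
      case False
      then obtain q where "q \<in> N (V - X) t" "q \<noteq> z" using z_in by blast
      then show ?thesis using unique_nbhd_two_neighbours z_in \<open>c = t\<close> by blast
    qed
  qed (use x_in third_leaf in \<open>auto simp: X_def\<close>)
  moreover have "card X = 5" using x_distinct third_leaf by (auto simp: X_def)
  moreover have "6 \<le> reduced_order V"
  proof -
    have "card {xs ! 0, xs ! 1, xs ! 2, xs ! 3, y, t} = 6" using x_distinct third_leaf t(2) by auto
    moreover have "N V t \<noteq> {}" using t(1,3) x_in in_N_commute[of "xs ! 3" V t] by (auto simp: in_N_iff)
    then have "card {xs ! 0, xs ! 1, xs ! 2, xs ! 3, y, t} \<le> reduced_order V"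
      using x_in x_non_isolated third_leaf t(1) N_y by (intro card_le_reduced_order_twin_free) auto
    ultimately show ?thesis by simp
  qed
  ultimately show ?thesis
    using i_max_split_third_leaf bound_delete_third_leaf g_le_triple_g_minus_5[of "reduced_order V"]
    unfolding X_def by simp
qed

end

lemma case_third_leaves_only:
  assumes leaf: "\<And>w. w \<in> N V (xs ! 2) - {xs ! 1, xs ! 3} \<Longrightarrow> N V w = {xs ! 2}"
  shows "g (reduced_order V) \<le> i_max V E"
proof -
  have x13: "xs ! 1 \<in> N V (xs ! 2)" "xs ! 3 \<in> N V (xs ! 2)" using x_in x_edges by (auto simp: in_N_iff)
  consider (degree_two) "N V (xs ! 2) = {xs ! 1, xs ! 3}"
    | (one_leaf) y where "y \<in> N V (xs ! 2) - {xs ! 1, xs ! 3}" "N V (xs ! 2) = {xs ! 1, xs ! 3, y}"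
  proof (cases "N V (xs ! 2) - {xs ! 1, xs ! 3} = {}")
    case False
    then obtain y where y: "y \<in> N V (xs ! 2) - {xs ! 1, xs ! 3}" by blast
    have "w = y" if "w \<in> N V (xs ! 2) - {xs ! 1, xs ! 3}" for w
      using inj_onD[OF twin_free] leaf[OF that] leaf[OF y] that y by (auto simp: in_N_iff)
    then show thesis using that(2)[OF y] x13 y by blast
  qed (use x13 in blast)
  then show ?thesis
  proof cases
    case degree_two
    then show ?thesis
      using case_third_degree_two_shared_leaf case_third_degree_two by blast
  next
    case (one_leaf y)
    then show ?thesis
      using case_third_with_leaf_unique_x3 case_third_with_leaf_twin_x3 leaf by blast
  qed
qed

lemma long_path_case: "g (reduced_order V) \<le> i_max V E"
  using case_third_has_deep_neighbour case_third_leaves_only by blast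

end

context acyclic_graph
begin

lemma longest_path_exists:
  assumes "finite V" and "is_path ys" "set ys \<subseteq> V"
  obtains xs where "is_path xs" "set xs \<subseteq> V"
    "\<And>zs. is_path zs \<Longrightarrow> set zs \<subseteq> V \<Longrightarrow> length zs \<le> length xs"
proof -
  have "length zs < Suc (card V)" if "is_path zs \<and> set zs \<subseteq> V" for zs
  proof -
    have "length zs = card (set zs)" using that distinct_card unfolding is_path_def by metis
    then show ?thesis using card_mono[OF assms(1), of "set zs"] that by simp
  qed
  then have "\<exists>xs. (is_path xs \<and> set xs \<subseteq> V)
      \<and> (\<forall>zs. is_path zs \<and> set zs \<subseteq> V \<longrightarrow> length zs \<le> length xs)"
    using ex_has_greatest_nat[of "\<lambda>zs. is_path zs \<and> set zs \<subseteq> V" ys length "Suc (card V)"]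
      assms(2,3) by blast
  then show thesis using that by blast
qed

end

context reduction_step
begin

lemma twin_free_case: "g (reduced_order V) \<le> i_max V E"
proof (cases "\<forall>a\<in>V. N V a = {}")
  case True
  then show ?thesis by (rule edgeless_case)
next
  case False
  then obtain a b where ab: "a \<in> V" "b \<in> N V a" by blast
  show ?thesis
  proof (cases "\<exists>u\<in>V. \<exists>v. N V u = {v} \<and> N V v = {u}")
    case True
    then show ?thesis using edge_component_case by blast
  next
    case no_edge_component: False
    have "is_path [a, b]" "set [a, b] \<subseteq> V" using ab irrefl by (auto simp: is_path_def in_N_iff)
    then obtain xs where xs: "is_path xs" "set xs \<subseteq> V"
      "\<And>zs. is_path zs \<Longrightarrow> set zs \<subseteq> V \<Longrightarrow> length zs \<le> length xs"
      using longest_path_exists finite by blast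
    then have "2 \<le> length xs" using \<open>is_path [a, b]\<close> \<open>set [a, b] \<subseteq> V\<close> by force
    then have LP: "longest_path E V xs"
      unfolding longest_path_def longest_path_axioms_def
      using acyclic_graph_axioms xs twin_free by blast
    interpret longest_path E V xs by (rule LP)
    have "4 \<le> length xs" using four_le_length_if_no_edge_component no_edge_component by blast
    then interpret long_path_step E V xs
      by (intro long_path_step.intro reduction_step_axioms LP long_path_step_axioms.intro)
    show ?thesis by (rule long_path_case)
  qed
qed

end

context acyclic_graph
begin

theorem g_reduced_order_le_i_max:
  "finite V \<Longrightarrow> g (reduced_order V) \<le> i_max V E"
proof (induction "card V" arbitrary: V rule: less_induct)
  case less
  have IH: "g (reduced_order V') \<le> i_max V' E" if "V' \<subset> V" for V'
    using less.hyps[of V'] psubset_card_mono[OF less.prems that] finite_subset[of V' V] less.prems that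
    by blast
  show ?case
  proof (cases "inj_on (N V) V")
    case True
    then interpret reduction_step E V using less.prems IH by unfold_locales
    show ?thesis by (rule twin_free_case)
  next
    case False
    then obtain u v where uv: "u \<in> V" "v \<in> V" "u \<noteq> v" "N V u = N V v"
      unfolding inj_on_def by blast
    then show ?thesis
      using IH[of "V - {v}"] i_max_remove_twin[OF less.prems uv] reduced_order_remove_twin[OF uv]
      by auto
  qed
qed

end

theorem corollary4p8:
  fixes V :: "'a set" and E :: "'a \<Rightarrow> 'a \<Rightarrow> bool"
  assumes "forest V E" and "twin_free V E" and "card V \<ge> 2"
  shows "i_max V E \<ge> f (card V - 1)"
proof -
  interpret acyclic_graph E using forest_imp_acyclic_graph[OF assms(1)] .
  have finite: "finite V" using assms(1) by (simp add: forest_def simple_graph_def)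
  have "inj_on (N V) V" using assms(2) unfolding twin_free_def inj_on_def by blast
  then have "card V - 1 \<le> reduced_order V" using card_minus_1_le_reduced_order finite by blast
  then have "f (card V - 1) \<le> g (reduced_order V)" using f_le_g g_mono le_trans by blast
  also have "\<dots> \<le> i_max V E" using g_reduced_order_le_i_max[OF finite] .
  finally show ?thesis .
qed

end
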